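(* Let $M>0$, $R_1>2M$, and let $\rho\in L^1([2M,R_1])$ with $\rho\ge0$. Define $m(r):=M-\int_r^{R_1}4\pi\eta^2\rho(\eta)\,d\eta$ for $r\in[2M,R_1]$, assume $0\le 2m(r)/r<1$ for all $r\in[2M,R_1]$, and set $e^{2\lambda(r)}:=(1-2m(r)/r)^{-1}$. Then for all $r\in[2M,R_1]$, $$\exp\Big(-2\int_r^{R_1}4\pi\eta\,\rho(\eta)\,e^{2\lambda(\eta)}\,d\eta\Big)\ \ge\ \frac{r-2M}{r-2m(r)}.$$ *)

theory Defs
  imports "HOL-Analysis.Analysis"
begin

definition mass :: "real \<Rightarrow> real \<Rightarrow> (real \<Rightarrow> real) \<Rightarrow> real \<Rightarrow> real" where
  "mass M R1 \<rho> r = M - (LINT \<eta>:{r..R1}|lborel. 4 * pi * \<eta>^2 * \<rho> \<eta>)"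

definition e2lambda :: "real \<Rightarrow> real \<Rightarrow> (real \<Rightarrow> real) \<Rightarrow> real \<Rightarrow> real" where
  "e2lambda M R1 \<rho> r = inverse (1 - 2 * mass M R1 \<rho> r / r)"

end

theory Submission
  imports Defs
begin

text \<open>
  Put \<open>v(s) = r - 2 m(s)\<close>. As \<open>m\<close> is nondecreasing with \<open>m(R\<^sub>1) = M\<close>, \<open>v\<close> decreases
  from \<open>r - 2 m(r)\<close> to \<open>v(R\<^sub>1) = r - 2M > 0\<close>, and for \<open>\<eta> \<ge> r\<close> one has
  \<open>exp (2 \<lambda>(\<eta>)) = \<eta> / (\<eta> - 2 m(\<eta>)) \<le> \<eta> / v(\<eta>)\<close>. Hence twice the exponent is at most
  the integral of \<open>2 m'/v = - v'/v\<close> over \<open>[r, R\<^sub>1]\<close>, which is \<open>ln (v(r) / v(R\<^sub>1))\<close>.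
  Since \<open>\<rho>\<close> is merely integrable, \<open>m\<close> is only absolutely continuous, and this integral is
  bounded without a chain rule: the defect \<open>\<integral>\<^sub>a\<^sup>b 2 m'/v - ln (v(a) / v(b))\<close> is additive in
  the interval and at most \<open>(v(a) - v(b))\<^sup>2 / v(R\<^sub>1)\<^sup>2\<close>; cutting \<open>[a, b]\<close> into \<open>n\<close> pieces on
  which the continuous function \<open>v\<close> has equal increments shows that it is at most \<open>1/n\<close> of
  that bound.
\<close>

lemma set_integrable_continuous_mult:
  fixes w \<rho> :: "real \<Rightarrow> real"
  assumes \<rho>: "set_integrable lborel {p..q} \<rho>" and w: "continuous_on {a..b} w"
    and sub: "{a..b} \<subseteq> {p..q}"
  shows "set_integrable lborel {a..b} (\<lambda>x. w x * \<rho> x)"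
proof -
  have "bounded (w ` {a..b})"
    using compact_imp_bounded[OF compact_continuous_image[OF w compact_Icc]] .
  then obtain B where "0 < B" and B: "\<And>x. x \<in> {a..b} \<Longrightarrow> \<bar>w x\<bar> \<le> B"
    unfolding bounded_pos by auto
  have \<rho>_ab: "set_integrable lborel {a..b} \<rho>"
    using set_integrable_subset[OF \<rho> _ sub] by simp
  then have "set_integrable lborel {a..b} (\<lambda>x. B * \<rho> x)"
    by simp
  moreover have "set_borel_measurable lborel {a..b} (\<lambda>x. w x * \<rho> x)"
  proof -
    have "(\<lambda>x. indicator {a..b} x *\<^sub>R w x) \<in> borel_measurable lborel"
      using borel_measurable_continuous_on_indicator[OF _ w] by simp
    moreover have "(\<lambda>x. indicator {a..b} x *\<^sub>R \<rho> x) \<in> borel_measurable lborel"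
      using \<rho>_ab by (simp add: set_integrable_def borel_measurable_integrable)
    ultimately show ?thesis
      unfolding set_borel_measurable_def
      by (rule borel_measurable_times[THEN measurable_cong[THEN iffD1, rotated]])
         (auto simp: indicator_def)
  qed
  moreover have "AE x in lborel. x \<in> {a..b} \<longrightarrow> norm (w x * \<rho> x) \<le> norm (B * \<rho> x)"
    using B \<open>0 < B\<close> by (intro AE_I2) (simp add: abs_mult mult_right_mono)
  ultimately show ?thesis
    by (rule set_integrable_bound)
qed

lemma set_integrable_divide_continuous:
  fixes g v :: "real \<Rightarrow> real"
  assumes g: "set_integrable lborel {a..b} g" and v: "continuous_on {s..t} v"
    and v_nonzero: "\<And>x. x \<in> {s..t} \<Longrightarrow> v x \<noteq> 0" and sub: "{s..t} \<subseteq> {a..b}"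
  shows "set_integrable lborel {s..t} (\<lambda>x. g x / v x)"
proof -
  have "set_integrable lborel {s..t} (\<lambda>x. inverse (v x) * g x)"
    using v v_nonzero sub by (intro set_integrable_continuous_mult[OF g] continuous_on_inverse) auto
  then show ?thesis
    by (simp add: divide_inverse mult.commute)
qed

lemma set_borel_integral_eq_integral_Icc:
  fixes f :: "real \<Rightarrow> real"
  assumes "set_integrable lborel {a..b} f" "a \<le> s" "t \<le> b"
  shows "(LINT x:{s..t}|lborel. f x) = integral {s..t} f"
proof -
  have "set_integrable lborel {s..t} f"
    by (rule set_integrable_subset[OF assms(1)]) (use assms in auto)
  then show ?thesis
    by (rule set_borel_integral_eq_integral(2))
qed

lemma continuous_on_set_integral_tail:
  fixes f :: "real \<Rightarrow> real"
  assumes "set_integrable lborel {a..b} f"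
  shows "continuous_on {a..b} (\<lambda>s. LINT x:{s..b}|lborel. f x)"
  using indefinite_integral_continuous_1'[OF set_borel_integral_eq_integral(1)[OF assms]]
  by (rule continuous_on_eq) (use set_borel_integral_eq_integral_Icc[OF assms] in auto)

lemma set_integral_combine:
  fixes f :: "real \<Rightarrow> real"
  assumes f: "set_integrable lborel {a..c} f" and "a \<le> b" "b \<le> c"
  shows "(LINT x:{a..c}|lborel. f x) = (LINT x:{a..b}|lborel. f x) + (LINT x:{b..c}|lborel. f x)"
  using Henstock_Kurzweil_Integration.integral_combine[OF assms(2,3) set_borel_integral_eq_integral(1)[OF f]] assms
  by (simp add: set_borel_integral_eq_integral_Icc[OF f])

lemma set_integral_nonneg:
  fixes f :: "real \<Rightarrow> real"
  assumes "\<And>x. x \<in> A \<Longrightarrow> 0 \<le> f x"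
  shows "0 \<le> (LINT x:A|M. f x)"
  unfolding set_lebesgue_integral_def
  using assms by (auto intro!: Bochner_Integration.integral_nonneg simp: indicator_def)

lemma additive_le_quadratic_bound_div:
  fixes F :: "real \<Rightarrow> real \<Rightarrow> real" and v :: "real \<Rightarrow> real"
  assumes v: "continuous_on {p..q} v"
    and additive: "\<And>a b c. p \<le> a \<Longrightarrow> a \<le> b \<Longrightarrow> b \<le> c \<Longrightarrow> c \<le> q \<Longrightarrow> F a c = F a b + F b c"
    and bound: "\<And>a b. p \<le> a \<Longrightarrow> a \<le> b \<Longrightarrow> b \<le> q \<Longrightarrow> F a b \<le> K * (v a - v b)\<^sup>2"
    and "p \<le> a" "a \<le> b" "b \<le> q"
  shows "F a b \<le> K * (v a - v b)\<^sup>2 / (real n + 1)"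
  using \<open>p \<le> a\<close> \<open>a \<le> b\<close> \<open>b \<le> q\<close>
proof (induction n arbitrary: a)
  case 0
  then show ?case using bound by simp
next
  case (Suc n)
  define D where "D = v a - v b"
  \<comment> \<open>Split at a point where \<open>v\<close> has covered the fraction \<open>1/(n+2)\<close> of its increment:
    the two quadratic bounds then add up to \<open>K D\<^sup>2/(n+2)\<close>.\<close>
  have "v a - D / (real n + 2) \<in> closed_segment (v a) (v b)"
    unfolding in_segment(1) D_def
    by (rule exI[of _ "1 / (real n + 2)"]) (simp add: algebra_simps diff_divide_distrib)
  moreover have "continuous_on (closed_segment a b) v"
    using v Suc.prems by (auto simp: closed_segment_eq_real_ivl intro: continuous_on_subset)
  ultimately obtain c where "c \<in> closed_segment a b" and vc: "v c = v a - D / (real n + 2)"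
    using IVT'_closed_segment_real by blast
  then have c: "a \<le> c" "c \<le> b"
    using Suc.prems(2) by (simp_all add: closed_segment_eq_real_ivl)
  have "F a b = F a c + F c b"
    by (rule additive) (use Suc.prems c in auto)
  also have "\<dots> \<le> K * (v a - v c)\<^sup>2 + K * (v c - v b)\<^sup>2 / (real n + 1)"
    using bound Suc.IH Suc.prems c by (intro add_mono) simp_all
  also have "\<dots> = K * D\<^sup>2 / (real (Suc n) + 1)"
  proof -
    have uneven_split: "K * (D / (N + 1))\<^sup>2 + K * (D * N / (N + 1))\<^sup>2 / N = K * D\<^sup>2 / (N + 1)"
      if "0 < N" for N :: real
      using that by (simp add: divide_simps power2_eq_square) algebra
    have "v a - v c = D / (real n + 2)" "v c - v b = D * (real n + 1) / (real n + 2)"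
      using vc by (simp_all add: D_def field_simps)
    then show ?thesis
      using uneven_split[of "real n + 1"] by (simp add: add.commute)
  qed
  finally show ?case unfolding D_def .
qed

lemma additive_nonpos_by_quadratic_bound:
  fixes F :: "real \<Rightarrow> real \<Rightarrow> real" and v :: "real \<Rightarrow> real"
  assumes v: "continuous_on {p..q} v"
    and additive: "\<And>a b c. p \<le> a \<Longrightarrow> a \<le> b \<Longrightarrow> b \<le> c \<Longrightarrow> c \<le> q \<Longrightarrow> F a c = F a b + F b c"
    and bound: "\<And>a b. p \<le> a \<Longrightarrow> a \<le> b \<Longrightarrow> b \<le> q \<Longrightarrow> F a b \<le> K * (v a - v b)\<^sup>2"
    and "p \<le> q"
  shows "F p q \<le> 0"
proof (rule ccontr)
  assume "\<not> F p q \<le> 0"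
  moreover obtain n :: nat where "K * (v p - v q)\<^sup>2 / F p q < real n"
    using reals_Archimedean2 by blast
  ultimately have "K * (v p - v q)\<^sup>2 / (real n + 1) < F p q"
    by (simp add: field_simps)
  moreover have "F p q \<le> K * (v p - v q)\<^sup>2 / (real n + 1)"
    using v additive bound by (rule additive_le_quadratic_bound_div) (use \<open>p \<le> q\<close> in auto)
  ultimately show False
    by simp
qed

lemma set_integral_div_ln_defect_le:
  fixes g v :: "real \<Rightarrow> real"
  assumes g: "set_integrable lborel {s..t} g" and gv: "set_integrable lborel {s..t} (\<lambda>x. g x / v x)"
    and g_nonneg: "\<And>x. x \<in> {s..t} \<Longrightarrow> 0 \<le> g x"
    and v_diff: "v s - v t = (LINT x:{s..t}|lborel. g x)"
    and v_min: "\<And>x. x \<in> {s..t} \<Longrightarrow> v t \<le> v x" and "s \<le> t" and "0 < c" and "c \<le> v t"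
  shows "(LINT x:{s..t}|lborel. g x / v x) - (ln (v s) - ln (v t)) \<le> (v s - v t)\<^sup>2 / c\<^sup>2"
proof -
  define D where "D = v s - v t"
  have vt: "0 < v t" and vs: "v t \<le> v s"
    using v_min[of s] \<open>s \<le> t\<close> \<open>0 < c\<close> \<open>c \<le> v t\<close> by simp_all
  \<comment> \<open>Both \<open>\<integral> g/v\<close> and \<open>ln (v s / v t)\<close> lie between \<open>D/v s\<close> and \<open>D/v t\<close>.\<close>
  have "(LINT x:{s..t}|lborel. g x / v x) \<le> (LINT x:{s..t}|lborel. g x / v t)"
  proof (rule set_integral_mono[OF gv])
    show "set_integrable lborel {s..t} (\<lambda>x. g x / v t)"
      using g by simp
    show "g x / v x \<le> g x / v t" if "x \<in> {s..t}" for x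
      using v_min[OF that] g_nonneg[OF that] vt by (intro divide_left_mono) auto
  qed
  also have "\<dots> = D / v t"
    unfolding D_def v_diff by simp
  finally have upper: "(LINT x:{s..t}|lborel. g x / v x) \<le> D / v t" .
  have "ln (v t / v s) \<le> v t / v s - 1"
    using vt vs by (intro ln_le_minus_one) simp
  then have lower: "D / v s \<le> ln (v s) - ln (v t)"
    using vt vs by (simp add: ln_div D_def diff_divide_distrib)
  have "(LINT x:{s..t}|lborel. g x / v x) - (ln (v s) - ln (v t)) \<le> D / v t - D / v s"
    using upper lower by simp
  also have "\<dots> = D\<^sup>2 / (v s * v t)"
    using vt vs by (simp add: D_def field_simps power2_eq_square)
  also have "\<dots> \<le> D\<^sup>2 / c\<^sup>2"
    using vt vs \<open>0 < c\<close> \<open>c \<le> v t\<close> unfolding power2_eq_square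
    by (intro divide_left_mono mult_mono) auto
  finally show ?thesis
    by (simp add: D_def)
qed

lemma set_integral_div_le_ln_diff:
  fixes g v :: "real \<Rightarrow> real"
  assumes g: "set_integrable lborel {a..b} g" and g_nonneg: "\<And>s. s \<in> {a..b} \<Longrightarrow> 0 \<le> g s"
    and v: "\<And>s. s \<in> {a..b} \<Longrightarrow> v s = v b + (LINT x:{s..b}|lborel. g x)"
    and vb: "0 < v b" and ab: "a \<le> b"
  shows "set_integrable lborel {a..b} (\<lambda>s. g s / v s)"
    and "(LINT s:{a..b}|lborel. g s / v s) \<le> ln (v a) - ln (v b)"
proof -
  have v_diff: "v s - v t = (LINT x:{s..t}|lborel. g x)" if "a \<le> s" "s \<le> t" "t \<le> b" for s t
  proof -
    have "set_integrable lborel {s..b} g"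
      using set_integrable_subset[OF g] that by simp
    from set_integral_combine[OF this that(2,3)] show ?thesis
      using v[of s] v[of t] that by simp
  qed
  have v_anti: "v t \<le> v s" if "a \<le> s" "s \<le> t" "t \<le> b" for s t
  proof -
    have "0 \<le> (LINT x:{s..t}|lborel. g x)"
      using g_nonneg that by (intro set_integral_nonneg) auto
    then show ?thesis
      using v_diff[OF that] by linarith
  qed
  have v_min: "v b \<le> v s" if "s \<in> {a..b}" for s
    using v_anti that by auto
  have "continuous_on {a..b} (\<lambda>s. v b + (LINT x:{s..b}|lborel. g x))"
    by (intro continuous_intros continuous_on_set_integral_tail[OF g])
  then have v_cont: "continuous_on {a..b} v"
    by (rule continuous_on_eq) (rule v[symmetric])
  have gv: "set_integrable lborel {s..t} (\<lambda>x. g x / v x)" if "a \<le> s" "t \<le> b" for s t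
  proof -
    have sub: "{s..t} \<subseteq> {a..b}"
      using that by auto
    then have "v x \<noteq> 0" if "x \<in> {s..t}" for x
      using v_min[of x] vb that by auto
    with sub show ?thesis
      by (intro set_integrable_divide_continuous[OF g continuous_on_subset[OF v_cont sub]])
  qed
  then show "set_integrable lborel {a..b} (\<lambda>s. g s / v s)"
    by simp
  define F where "F s t = (LINT x:{s..t}|lborel. g x / v x) - (ln (v s) - ln (v t))" for s t
  have F_additive: "F s u = F s t + F t u" if "a \<le> s" "s \<le> t" "t \<le> u" "u \<le> b" for s t u
  proof -
    have "set_integrable lborel {s..u} (\<lambda>x. g x / v x)"
      using gv that by simp
    from set_integral_combine[OF this that(2,3)] show ?thesis
      unfolding F_def by simp
  qed
  have F_bound: "F s t \<le> 1 / (v b)\<^sup>2 * (v s - v t)\<^sup>2" if "a \<le> s" "s \<le> t" "t \<le> b" for s t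
  proof -
    have "set_integrable lborel {s..t} g"
      by (rule set_integrable_subset[OF g]) (use that in auto)
    then have "F s t \<le> (v s - v t)\<^sup>2 / (v b)\<^sup>2"
      unfolding F_def using that g_nonneg v_anti[of _ t] v_anti[of t b] vb
      by (intro set_integral_div_ln_defect_le gv v_diff) auto
    then show ?thesis
      by simp
  qed
  have "F a b \<le> 0"
    using v_cont F_additive F_bound ab by (rule additive_nonpos_by_quadratic_bound)
  then show "(LINT s:{a..b}|lborel. g s / v s) \<le> ln (v a) - ln (v b)"
    unfolding F_def by simp
qed

lemma set_integral_lborel_singleton [simp]:
  fixes f :: "real \<Rightarrow> real"
  shows "(LINT x:{c}|lborel. f x) = 0"
  unfolding set_lebesgue_integral_def
  by (rule integral_eq_zero_AE) (use AE_lborel_singleton[of c] in \<open>auto elim: eventually_mono\<close>)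

lemma mass_upper_end [simp]: "mass M R1 \<rho> R1 = M"
  by (simp add: mass_def)

lemma mass_le:
  assumes "\<And>\<eta>. \<eta> \<in> {s..R1} \<Longrightarrow> 0 \<le> \<rho> \<eta>"
  shows "mass M R1 \<rho> s \<le> M"
  unfolding mass_def using assms by (auto intro!: set_integral_nonneg)

lemma continuous_on_mass:
  assumes "set_integrable lborel {a..R1} (\<lambda>\<eta>. 4 * pi * \<eta>\<^sup>2 * \<rho> \<eta>)"
  shows "continuous_on {a..R1} (mass M R1 \<rho>)"
  unfolding mass_def[abs_def]
  by (intro continuous_intros continuous_on_set_integral_tail[OF assms])

lemma continuous_on_e2lambda:
  assumes "set_integrable lborel {a..R1} (\<lambda>\<eta>. 4 * pi * \<eta>\<^sup>2 * \<rho> \<eta>)" and "0 < a"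
    and "\<And>s. s \<in> {a..R1} \<Longrightarrow> 2 * mass M R1 \<rho> s / s < 1"
  shows "continuous_on {a..R1} (e2lambda M R1 \<rho>)"
  unfolding e2lambda_def[abs_def] using assms(2,3)
  by (intro continuous_intros continuous_on_mass[OF assms(1)]) force+

lemma e2lambda_integrand_le:
  assumes "0 < \<eta>" and "0 < u" and "u \<le> \<eta> - 2 * mass M R1 \<rho> \<eta>" and "0 \<le> \<rho> \<eta>"
  shows "2 * (4 * pi * \<eta> * \<rho> \<eta> * e2lambda M R1 \<rho> \<eta>) \<le> 2 * (4 * pi * \<eta>\<^sup>2 * \<rho> \<eta>) / u"
proof -
  have "e2lambda M R1 \<rho> \<eta> = \<eta> / (\<eta> - 2 * mass M R1 \<rho> \<eta>)"
    using assms unfolding e2lambda_def by (simp add: field_simps)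
  also have "\<dots> \<le> \<eta> / u"
    using assms by (intro divide_left_mono) auto
  finally have "2 * (4 * pi * \<eta> * \<rho> \<eta>) * e2lambda M R1 \<rho> \<eta> \<le> 2 * (4 * pi * \<eta> * \<rho> \<eta>) * (\<eta> / u)"
    using assms by (intro mult_left_mono) auto
  then show ?thesis
    by (simp add: power2_eq_square mult_ac)
qed

lemma set_integral_mass_density_le_ln:
  fixes \<rho> :: "real \<Rightarrow> real"
  assumes \<rho>: "set_integrable lborel {r..R1} (\<lambda>\<eta>. 4 * pi * \<eta>\<^sup>2 * \<rho> \<eta>)"
    and \<rho>_nonneg: "\<And>\<eta>. \<eta> \<in> {r..R1} \<Longrightarrow> 0 \<le> \<rho> \<eta>" and "2 * M < r" and "r \<le> R1"
  shows "set_integrable lborel {r..R1} (\<lambda>\<eta>. 2 * (4 * pi * \<eta>\<^sup>2 * \<rho> \<eta>) / (r - 2 * mass M R1 \<rho> \<eta>))"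
    and "(LINT \<eta>:{r..R1}|lborel. 2 * (4 * pi * \<eta>\<^sup>2 * \<rho> \<eta>) / (r - 2 * mass M R1 \<rho> \<eta>))
           \<le> ln (r - 2 * mass M R1 \<rho> r) - ln (r - 2 * M)"
proof -
  define v where "v s = r - 2 * mass M R1 \<rho> s" for s
  have "v s = v R1 + (LINT \<eta>:{s..R1}|lborel. 2 * (4 * pi * \<eta>\<^sup>2 * \<rho> \<eta>))" for s
    unfolding v_def mass_def set_integral_mult_right by simp
  moreover have "set_integrable lborel {r..R1} (\<lambda>\<eta>. 2 * (4 * pi * \<eta>\<^sup>2 * \<rho> \<eta>))"
    by (rule set_integrable_mult_right) (rule \<rho>)
  moreover have "0 \<le> 2 * (4 * pi * \<eta>\<^sup>2 * \<rho> \<eta>)" if "\<eta> \<in> {r..R1}" for \<eta>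
    using \<rho>_nonneg[OF that] by simp
  moreover have "0 < v R1"
    using \<open>2 * M < r\<close> by (simp add: v_def)
  ultimately show "set_integrable lborel {r..R1} (\<lambda>\<eta>. 2 * (4 * pi * \<eta>\<^sup>2 * \<rho> \<eta>) / (r - 2 * mass M R1 \<rho> \<eta>))"
    and "(LINT \<eta>:{r..R1}|lborel. 2 * (4 * pi * \<eta>\<^sup>2 * \<rho> \<eta>) / (r - 2 * mass M R1 \<rho> \<eta>))
           \<le> ln (r - 2 * mass M R1 \<rho> r) - ln (r - 2 * M)"
    using set_integral_div_le_ln_diff[of r R1 _ v] \<open>r \<le> R1\<close> unfolding v_def by auto
qed

lemma set_integral_e2lambda_le_ln:
  fixes \<rho> :: "real \<Rightarrow> real"
  assumes \<rho>: "set_integrable lborel {r..R1} \<rho>" and \<rho>_nonneg: "\<And>\<eta>. \<eta> \<in> {r..R1} \<Longrightarrow> 0 \<le> \<rho> \<eta>"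
    and "0 \<le> M" and r: "2 * M < r" "r \<le> R1"
    and mass_bound: "\<And>s. s \<in> {r..R1} \<Longrightarrow> 2 * mass M R1 \<rho> s / s < 1"
  shows "2 * (LINT \<eta>:{r..R1}|lborel. 4 * pi * \<eta> * \<rho> \<eta> * e2lambda M R1 \<rho> \<eta>)
           \<le> ln (r - 2 * mass M R1 \<rho> r) - ln (r - 2 * M)"
proof -
  have m_int: "set_integrable lborel {r..R1} (\<lambda>\<eta>. 4 * pi * \<eta>\<^sup>2 * \<rho> \<eta>)"
    by (rule set_integrable_continuous_mult[OF \<rho>]) (auto intro!: continuous_intros)
  have "set_integrable lborel {r..R1} (\<lambda>\<eta>. (4 * pi * \<eta> * e2lambda M R1 \<rho> \<eta>) * \<rho> \<eta>)"
    using \<open>0 \<le> M\<close> r mass_bound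
    by (intro set_integrable_continuous_mult[OF \<rho>] continuous_intros continuous_on_e2lambda[OF m_int]) auto
  then have "set_integrable lborel {r..R1} (\<lambda>\<eta>. 2 * (4 * pi * \<eta> * \<rho> \<eta> * e2lambda M R1 \<rho> \<eta>))"
    by (intro set_integrable_mult_right) (simp add: mult_ac)
  then have "(LINT \<eta>:{r..R1}|lborel. 2 * (4 * pi * \<eta> * \<rho> \<eta> * e2lambda M R1 \<rho> \<eta>))
      \<le> (LINT \<eta>:{r..R1}|lborel. 2 * (4 * pi * \<eta>\<^sup>2 * \<rho> \<eta>) / (r - 2 * mass M R1 \<rho> \<eta>))"
  proof (rule set_integral_mono[OF _ set_integral_mass_density_le_ln(1)[OF m_int \<rho>_nonneg r]])
    fix \<eta> assume \<eta>: "\<eta> \<in> {r..R1}"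
    have "mass M R1 \<rho> \<eta> \<le> M"
      using \<rho>_nonneg \<eta> by (intro mass_le) auto
    with \<eta> show "2 * (4 * pi * \<eta> * \<rho> \<eta> * e2lambda M R1 \<rho> \<eta>)
        \<le> 2 * (4 * pi * \<eta>\<^sup>2 * \<rho> \<eta>) / (r - 2 * mass M R1 \<rho> \<eta>)"
      using \<open>0 \<le> M\<close> r \<rho>_nonneg[OF \<eta>] by (intro e2lambda_integrand_le) auto
  qed
  with set_integral_mass_density_le_ln(2)[OF m_int \<rho>_nonneg r] show ?thesis
    unfolding set_integral_mult_right by linarith
qed

theorem lemma4p1:
  fixes M R1 r :: real and \<rho> :: "real \<Rightarrow> real"
  assumes "M > 0" and "R1 > 2 * M"
    and "set_integrable lborel {2 * M..R1} \<rho>"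
    and "\<forall>\<eta>\<in>{2 * M..R1}. \<rho> \<eta> \<ge> 0"
    and "\<forall>s\<in>{2 * M..R1}. 0 \<le> 2 * mass M R1 \<rho> s / s \<and> 2 * mass M R1 \<rho> s / s < 1"
    and "r \<in> {2 * M..R1}"
  shows "exp (- 2 * (LINT \<eta>:{r..R1}|lborel. 4 * pi * \<eta> * \<rho> \<eta> * e2lambda M R1 \<rho> \<eta>))
           \<ge> (r - 2 * M) / (r - 2 * mass M R1 \<rho> r)"
proof (cases "r = 2 * M")
  case True
  then show ?thesis by simp
next
  case False
  with assms(6) have r: "2 * M < r" "r \<le> R1" by auto
  have "set_integrable lborel {r..R1} \<rho>"
    by (rule set_integrable_subset[OF assms(3)]) (use r in auto)
  then have "2 * (LINT \<eta>:{r..R1}|lborel. 4 * pi * \<eta> * \<rho> \<eta> * e2lambda M R1 \<rho> \<eta>)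
      \<le> ln (r - 2 * mass M R1 \<rho> r) - ln (r - 2 * M)"
    by (rule set_integral_e2lambda_le_ln) (use assms(1,4,5) r in auto)
  then have "ln (r - 2 * M) - ln (r - 2 * mass M R1 \<rho> r)
      \<le> - 2 * (LINT \<eta>:{r..R1}|lborel. 4 * pi * \<eta> * \<rho> \<eta> * e2lambda M R1 \<rho> \<eta>)"
    by linarith
  moreover have "mass M R1 \<rho> r \<le> M"
    using assms(4) r by (intro mass_le) auto
  then have "exp (ln (r - 2 * M) - ln (r - 2 * mass M R1 \<rho> r)) = (r - 2 * M) / (r - 2 * mass M R1 \<rho> r)"
    using r by (simp add: exp_diff)
  ultimately show ?thesis
    by (metis exp_le_cancel_iff)
qed

end
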